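(* Let $X$ be a connected, locally path connected space, $n\in\mathbb{N}$, and let $A_1,\dots,A_n\subseteq X$ be open subsets such that each closure $\overline{A_i}$ is path connected. Let $p:X\to X/(A_1,\dots,A_n)$ be the associated quotient map, and suppose $X/(A_1,\dots,A_n)$ is semi-locally simply connected. Then for every $a\in\bigcup_{i=1}^n A_i$, with $*=p(a)$, the homomorphism $p_*:\pi_1^{top}(X,a)\to\pi_1^{top}(X/(A_1,\dots,A_n),* )$ is surjective.
   Context: For subsets $A_1,\dots,A_n$ of a space $X$, $X/(A_1,\dots,A_n)$ denotes the quotient space of $X$ by the equivalence relation generated by identifying all points of $A_i$ with each other for each $i$, and $p$ is the quotient map. $\pi_1^{top}(X,x)$ is $\pi_1(X,x)$ with the quotient topology from the loop space $\Omega(X,x)$ with the compact-open topology. A space $Y$ is semi-locally simply connected if every $y\in Y$ has an open neighborhood $U$ such that every loop in $U$ based at $y$ is nullhomotopic in $Y$. *)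

theory Defs
  imports "HOL-Analysis.Analysis"
begin

definition collapse_rel :: "'a topology \<Rightarrow> nat \<Rightarrow> (nat \<Rightarrow> 'a set) \<Rightarrow> ('a \<times> 'a) set" where
  "collapse_rel X n A = (Id_on (topspace X) \<union> (\<Union>i\<in>{1..n}. A i \<times> A i))\<^sup>+"

definition collapse_map :: "'a topology \<Rightarrow> nat \<Rightarrow> (nat \<Rightarrow> 'a set) \<Rightarrow> 'a \<Rightarrow> 'a set" where
  "collapse_map X n A x = collapse_rel X n A `` {x}"

definition quotient_top :: "'a topology \<Rightarrow> ('a \<Rightarrow> 'b) \<Rightarrow> 'b topology" where
  "quotient_top X f = topology (\<lambda>U. U \<subseteq> f ` topspace X \<and> openin X {x \<in> topspace X. f x \<in> U})"

definition collapse_space :: "'a topology \<Rightarrow> nat \<Rightarrow> (nat \<Rightarrow> 'a set) \<Rightarrow> 'a set topology" where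
  "collapse_space X n A = quotient_top X (collapse_map X n A)"

definition homotopic_loops_at :: "'b topology \<Rightarrow> 'b \<Rightarrow> (real \<Rightarrow> 'b) \<Rightarrow> (real \<Rightarrow> 'b) \<Rightarrow> bool" where
  "homotopic_loops_at Y y f g =
     homotopic_with (\<lambda>h. h 0 = y \<and> h 1 = y) (top_of_set {0..1}) Y f g"

definition loop_at :: "'b topology \<Rightarrow> 'b \<Rightarrow> (real \<Rightarrow> 'b) \<Rightarrow> bool" where
  "loop_at Y y g \<longleftrightarrow> pathin Y g \<and> g 0 = y \<and> g 1 = y"

definition semi_locally_simply_connected :: "'b topology \<Rightarrow> bool" where
  "semi_locally_simply_connected Y \<longleftrightarrow>
     (\<forall>y \<in> topspace Y. \<exists>U. openin Y U \<and> y \<in> U \<and>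
        (\<forall>g. loop_at (subtopology Y U) y g \<longrightarrow> homotopic_loops_at Y y g (\<lambda>_. y)))"

end

theory Submission
  imports Defs
begin

text \<open>
  Write \<open>p : X \<rightarrow> Y = X/(A_1,\<dots>,A_n)\<close> and call a path \<open>g\<close> in \<open>Y\<close>
  liftable if for all points \<open>x\<^sub>0, x\<^sub>1\<close> of \<open>X\<close> over its end points there is a path
  \<open>\<gamma>\<close> from \<open>x\<^sub>0\<close> to \<open>x\<^sub>1\<close> in \<open>X\<close> with \<open>p \<circ> \<gamma>\<close> homotopic to \<open>g\<close> rel end points.
  The theorem says exactly that loops at \<open>p a\<close> are liftable.

  (1) Any two points \<open>x\<^sub>0, x\<^sub>1\<close> with \<open>p x\<^sub>0 = p x\<^sub>1\<close> are joined by a path in \<open>X\<close>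
      (a chain of paths in the path connected closures of the \<open>A_i\<close>) whose image
      lies in the closure of the point \<open>p x\<^sub>0\<close>; such a projected path is nullhomotopic.
      Hence every path homotopic to a projection \<open>p \<circ> \<gamma>\<close> is liftable.
  (2) Near every point of \<open>Y\<close> all paths are liftable: take \<open>U\<close> from semi-local
      simple connectivity and a path connected open \<open>V \<subseteq> p\<^sup>-\<^sup>1 U\<close>; \<open>p V\<close> is open since
      \<open>p\<close> is an open map, and a path in \<open>p V\<close> is homotopic to the projection of a
      path in \<open>V\<close>, because the resulting loops in \<open>U\<close> are nullhomotopic.
  (3) Liftable paths are closed under homotopy and concatenation, so by a
      Lebesgue number argument every path in \<open>Y\<close> is liftable.
\<close>

section \<open>Paths in arbitrary topological spaces\<close>

text \<open>Concatenation, reversal and affine restriction of paths; the library versions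
  require a type class topology, while the quotient space here is a \<open>topology\<close> value.\<close>

definition path_join :: "(real \<Rightarrow> 'b) \<Rightarrow> (real \<Rightarrow> 'b) \<Rightarrow> real \<Rightarrow> 'b" (infixr "+j+" 75) where
  "g +j+ h = (\<lambda>x. if x \<le> 1/2 then g (2 * x) else h (2 * x - 1))"

definition reverse_path :: "(real \<Rightarrow> 'b) \<Rightarrow> real \<Rightarrow> 'b" where
  "reverse_path g = (\<lambda>x. g (1 - x))"

definition sub_path :: "real \<Rightarrow> real \<Rightarrow> (real \<Rightarrow> 'b) \<Rightarrow> real \<Rightarrow> 'b" where
  "sub_path u v g = (\<lambda>x. g ((v - u) * x + u))"

definition path_homotopic :: "'b topology \<Rightarrow> (real \<Rightarrow> 'b) \<Rightarrow> (real \<Rightarrow> 'b) \<Rightarrow> bool" where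
  "path_homotopic Y g h \<longleftrightarrow>
     homotopic_with (\<lambda>k. k 0 = g 0 \<and> k 1 = g 1) (top_of_set {0..1}) Y g h"

lemma path_join_start [simp]: "(g +j+ h) 0 = g 0"
  and path_join_finish [simp]: "(g +j+ h) 1 = h 1"
  and reverse_path_start [simp]: "reverse_path g 0 = g 1"
  and reverse_path_finish [simp]: "reverse_path g 1 = g 0"
  by (simp_all add: path_join_def reverse_path_def)

lemma path_join_image:
  assumes "g \<in> {0..1} \<rightarrow> S" "h \<in> {0..1} \<rightarrow> S"
  shows "(g +j+ h) \<in> {0..1} \<rightarrow> S"
proof
  fix x :: real assume "x \<in> {0..1}"
  then show "(g +j+ h) x \<in> S"
    using funcset_mem[OF assms(1), of "2 * x"] funcset_mem[OF assms(2), of "2 * x - 1"]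
    by (auto simp: path_join_def)
qed

lemma reverse_path_image: "g \<in> {0..1} \<rightarrow> S \<Longrightarrow> reverse_path g \<in> {0..1} \<rightarrow> S"
  by (auto simp: reverse_path_def intro!: funcset_mem[of g "{0..1}"])

lemma comp_path_join: "f \<circ> (g +j+ h) = (f \<circ> g) +j+ (f \<circ> h)"
  and comp_reverse_path: "f \<circ> reverse_path g = reverse_path (f \<circ> g)"
  by (auto simp: path_join_def reverse_path_def)

lemma path_homotopic_imp_paths:
  assumes "path_homotopic Y g h"
  shows "pathin Y g \<and> pathin Y h \<and> h 0 = g 0 \<and> h 1 = g 1"
proof -
  have "continuous_map (top_of_set {0..1}) Y g \<and> continuous_map (top_of_set {0..1}) Y h"
    using assms unfolding path_homotopic_def by (rule homotopic_with_imp_continuous_maps)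
  moreover have "h 0 = g 0 \<and> h 1 = g 1"
    using homotopic_with_imp_property[OF assms[unfolded path_homotopic_def]] by simp
  ultimately show ?thesis by (simp add: pathin_def)
qed

lemma path_homotopic_refl: "pathin Y g \<Longrightarrow> path_homotopic Y g g"
  by (simp add: path_homotopic_def pathin_def)

lemma path_homotopic_sym:
  assumes "path_homotopic Y g h" shows "path_homotopic Y h g"
proof -
  have e: "h 0 = g 0" "h 1 = g 1" using path_homotopic_imp_paths[OF assms] by auto
  show ?thesis using assms unfolding path_homotopic_def e using homotopic_with_symD by blast
qed

lemma path_homotopic_trans [trans]:
  assumes "path_homotopic Y g h" "path_homotopic Y h k" shows "path_homotopic Y g k"
proof -
  have e: "h 0 = g 0" "h 1 = g 1" using path_homotopic_imp_paths[OF assms(1)] by auto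
  show ?thesis using assms unfolding path_homotopic_def e by (rule homotopic_with_trans)
qed

lemma path_homotopic_eq:
  assumes "pathin Y g" "\<And>x. x \<in> {0..1} \<Longrightarrow> g x = h x"
  shows "path_homotopic Y g h"
  unfolding path_homotopic_def
proof (rule homotopic_with_equal)
  show "continuous_map (top_of_set {0..1}) Y g" using assms(1) by (simp add: pathin_def)
  show "h 0 = g 0 \<and> h 1 = g 1" using assms(2)[of 0] assms(2)[of 1] by simp
qed (use assms(2) in auto)

text \<open>Two reparametrisations of a path with the same end points are homotopic,
  via the straight-line homotopy between the parameter maps.\<close>
lemma path_homotopic_reparam:
  assumes g: "pathin Y g"
    and c1: "continuous_on {0..1} f1" and c2: "continuous_on {0..1} f2"
    and r1: "f1 ` {0..1} \<subseteq> {0..1}" and r2: "f2 ` {0..1} \<subseteq> {0..1}"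
    and e0: "f1 0 = f2 0" and e1: "f1 1 = f2 1"
  shows "path_homotopic Y (g \<circ> f1) (g \<circ> f2)"
  unfolding path_homotopic_def homotopic_with_def
proof (intro exI conjI)
  define F where "F = (\<lambda>z::real\<times>real. (1 - fst z) * f1 (snd z) + fst z * f2 (snd z))"
  have "continuous_on ({0..1}\<times>{0..1}) F"
    unfolding F_def
    by (intro continuous_intros continuous_on_compose2[OF c1] continuous_on_compose2[OF c2]) auto
  moreover have "F z \<in> {0..1}" if "z \<in> {0..1}\<times>{0..1}" for z
  proof -
    obtain t s where "z = (t, s)" by (cases z)
    with that have z: "z = (t, s)" "t \<in> {0..1}" "s \<in> {0..1}" by auto
    have a: "f1 s \<in> {0..1}" "f2 s \<in> {0..1}"
      using r1 r2 z(3) by (auto simp: image_subset_iff simp del: atLeastAtMost_iff)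
    have "(1 - t) * f1 s + t * f2 s \<le> (1 - t) * 1 + t * 1"
      using a z by (intro add_mono mult_left_mono) auto
    then show ?thesis using a z by (simp add: F_def)
  qed
  ultimately have "continuous_map (top_of_set ({0..1}\<times>{0..1})) (top_of_set {0..1}) F"
    by (auto simp: continuous_map_in_subtopology)
  from continuous_map_compose[OF this g[unfolded pathin_def]]
  show "continuous_map (prod_topology (top_of_set {0..1}) (top_of_set {0..1})) Y (g \<circ> F)"
    by simp
  show "\<forall>x. (g \<circ> F) (0, x) = (g \<circ> f1) x" "\<forall>x. (g \<circ> F) (1, x) = (g \<circ> f2) x"
    by (simp_all add: F_def)
  have "(1 - t) * a + t * a = a" for t a :: real by (simp add: left_diff_distrib)
  then show "\<forall>t\<in>{0..1}. (\<lambda>x. (g \<circ> F) (t, x)) 0 = (g \<circ> f1) 0 \<and> (\<lambda>x. (g \<circ> F) (t, x)) 1 = (g \<circ> f1) 1"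
    by (simp add: F_def e0 e1)
qed

lemma pathin_reparam:
  "pathin Y g \<Longrightarrow> continuous_on {0..1} f \<Longrightarrow> f ` {0..1} \<subseteq> {0..1} \<Longrightarrow> pathin Y (g \<circ> f)"
  using path_homotopic_imp_paths path_homotopic_reparam by blast

lemma path_homotopic_via_reparam:
  assumes "pathin Y g" "continuous_on {0..1} u" "u ` {0..1} \<subseteq> {0..1}"
    "continuous_on {0..1} v" "v ` {0..1} \<subseteq> {0..1}" "u 0 = v 0" "u 1 = v 1"
    "\<And>x. x \<in> {0..1} \<Longrightarrow> a x = g (u x)" "\<And>x. x \<in> {0..1} \<Longrightarrow> b x = g (v x)"
  shows "path_homotopic Y a b"
proof -
  have h: "path_homotopic Y (g \<circ> u) (g \<circ> v)" using path_homotopic_reparam assms(1-7) by blast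
  then have "pathin Y (g \<circ> u)" "pathin Y (g \<circ> v)" using path_homotopic_imp_paths by blast+
  then have "path_homotopic Y (g \<circ> u) a" "path_homotopic Y (g \<circ> v) b"
    by (auto intro!: path_homotopic_eq simp: assms(8,9))
  then show ?thesis using h path_homotopic_trans path_homotopic_sym by blast
qed

lemma pathin_reverse: "pathin Y g \<Longrightarrow> pathin Y (reverse_path g)"
proof -
  assume "pathin Y g"
  moreover have "continuous_on {0..1} (\<lambda>x::real. 1 - x)" "(\<lambda>x::real. 1 - x) ` {0..1} \<subseteq> {0..1}"
    by (auto intro!: continuous_intros)
  ultimately have "pathin Y (g \<circ> (\<lambda>x. 1 - x))" by (rule pathin_reparam)
  then show ?thesis by (simp add: reverse_path_def o_def)
qed

lemma continuous_map_compose_on: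
  assumes "continuous_on S m" "m ` S \<subseteq> T" "continuous_map (top_of_set T) Y G"
  shows "continuous_map (top_of_set S) Y (G \<circ> m)"
proof -
  have "continuous_map (top_of_set S) (top_of_set T) m"
    using assms(1,2) by (auto simp: continuous_map_subtopology_eu image_subset_iff_funcset)
  then show ?thesis using assms(3) by (rule continuous_map_compose)
qed

text \<open>Concatenation respects homotopy; both homotopies are glued along \<open>s = 1/2\<close>.\<close>
lemma path_homotopic_join:
  assumes gg: "path_homotopic Y g g'" and hh: "path_homotopic Y h h'" and e: "g 1 = h 0"
  shows "path_homotopic Y (g +j+ h) (g' +j+ h')"
proof -
  let ?S = "{0..1::real} \<times> {0..1::real}"
  have sub: "subtopology (top_of_set S) {z \<in> topspace (top_of_set S). P z} = top_of_set {z\<in>S. P z}"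
    for S :: "(real \<times> real) set" and P
    by (simp add: subtopology_subtopology Collect_conj_eq Int_commute)
  obtain G where Gc: "continuous_map (top_of_set ?S) Y G" and G0: "\<forall>x. G (0,x) = g x"
      and G1: "\<forall>x. G (1,x) = g' x" and GP: "\<forall>t\<in>{0..1}. G (t,0) = g 0 \<and> G (t,1) = g 1"
    using gg unfolding path_homotopic_def homotopic_with_def by auto
  obtain K where Kc: "continuous_map (top_of_set ?S) Y K" and K0: "\<forall>x. K (0,x) = h x"
      and K1: "\<forall>x. K (1,x) = h' x" and KP: "\<forall>t\<in>{0..1}. K (t,0) = h 0 \<and> K (t,1) = h 1"
    using hh unfolding path_homotopic_def homotopic_with_def by auto
  define k where "k = (\<lambda>z::real\<times>real. if snd z \<le> 1/2 then (G \<circ> (\<lambda>z. (fst z, 2 * snd z))) z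
                                   else (K \<circ> (\<lambda>z. (fst z, 2 * snd z - 1))) z)"
  have "continuous_map (top_of_set ?S) Y k"
    unfolding k_def
  proof (rule continuous_map_cases_le)
    show "continuous_map (top_of_set ?S) euclideanreal snd"
      by (simp add: continuous_on_snd)
    show "continuous_map (subtopology (top_of_set ?S) {z \<in> topspace (top_of_set ?S). snd z \<le> 1/2}) Y
            (G \<circ> (\<lambda>z. (fst z, 2 * snd z)))"
      unfolding sub by (rule continuous_map_compose_on[OF _ _ Gc]) (auto intro!: continuous_intros)
    show "continuous_map (subtopology (top_of_set ?S) {z \<in> topspace (top_of_set ?S). 1/2 \<le> snd z}) Y
            (K \<circ> (\<lambda>z. (fst z, 2 * snd z - 1)))"
      unfolding sub by (rule continuous_map_compose_on[OF _ _ Kc]) (auto intro!: continuous_intros)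
    fix z assume "z \<in> topspace (top_of_set ?S)" "snd z = 1/2"
    then obtain t where "z = (t, 1/2)" "t \<in> {0..1}" by (cases z) auto
    then show "(G \<circ> (\<lambda>z. (fst z, 2 * snd z))) z = (K \<circ> (\<lambda>z. (fst z, 2 * snd z - 1))) z"
      using GP KP e by simp
  qed simp
  then show ?thesis
    unfolding path_homotopic_def homotopic_with_def
    using G0 G1 K0 K1 GP KP by (intro exI[of _ k]) (auto simp: k_def path_join_def)
qed

lemma pathin_join: "pathin Y g \<Longrightarrow> pathin Y h \<Longrightarrow> g 1 = h 0 \<Longrightarrow> pathin Y (g +j+ h)"
  using path_homotopic_imp_paths path_homotopic_join path_homotopic_refl by metis

text \<open>The groupoid laws for concatenation, all instances of reparametrisation.\<close>

lemma path_homotopic_assoc: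
  assumes "pathin Y f" "pathin Y g" "pathin Y h" "f 1 = g 0" "g 1 = h 0"
  shows "path_homotopic Y (f +j+ (g +j+ h)) ((f +j+ g) +j+ h)"
proof (rule path_homotopic_via_reparam[where g="(f +j+ g) +j+ h"
      and u="\<lambda>x. max (x/2) (max (x - 1/4) (2*x - 1))" and v="\<lambda>x. x"])
  show "pathin Y ((f +j+ g) +j+ h)" using assms by (simp add: pathin_join)
  show "continuous_on {0..1} (\<lambda>x::real. max (x/2) (max (x - 1/4) (2*x - 1)))"
    by (intro continuous_intros) auto
  let ?u = "\<lambda>x::real. max (x/2) (max (x - 1/4) (2*x - 1))"
  fix x :: real
  consider "x \<le> 1/2" "?u x = x/2" | "1/2 < x" "x \<le> 3/4" "?u x = x - 1/4" | "3/4 < x" "?u x = 2*x - 1"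
    by (cases "x \<le> 1/2"; cases "x \<le> 3/4") auto
  then show "(f +j+ (g +j+ h)) x = ((f +j+ g) +j+ h) (?u x)"
    by cases (simp_all add: path_join_def algebra_simps)
qed (auto simp: max_def)

lemma path_homotopic_lunit: "pathin Y g \<Longrightarrow> path_homotopic Y ((\<lambda>_. g 0) +j+ g) g"
  by (rule path_homotopic_via_reparam[where g=g and u="\<lambda>x. max 0 (2*x - 1)" and v="\<lambda>x. x"])
     (auto intro!: continuous_intros simp: path_join_def)

lemma path_homotopic_runit: "pathin Y g \<Longrightarrow> path_homotopic Y (g +j+ (\<lambda>_. g 1)) g"
  by (rule path_homotopic_via_reparam[where g=g and u="\<lambda>x. min 1 (2*x)" and v="\<lambda>x. x"])
     (auto intro!: continuous_intros simp: path_join_def)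

lemma path_homotopic_linv: "pathin Y g \<Longrightarrow> path_homotopic Y (reverse_path g +j+ g) (\<lambda>_. g 1)"
  by (rule path_homotopic_via_reparam[where g=g and u="\<lambda>x. \<bar>1 - 2*x\<bar>" and v="\<lambda>x. 1"])
     (auto intro!: continuous_intros simp: path_join_def reverse_path_def)

lemma path_homotopic_pad:
  assumes "pathin Y g"
  shows "path_homotopic Y ((\<lambda>_. g 0) +j+ (g +j+ (\<lambda>_. g 1))) g"
proof (rule path_homotopic_via_reparam[where g=g and u="\<lambda>x. max 0 (min 1 (4*x - 2))" and v="\<lambda>x. x"])
  show "continuous_on {0..1} (\<lambda>x::real. max 0 (min 1 (4*x - 2)))" by (intro continuous_intros)
  show "(\<lambda>x::real. max 0 (min 1 (4*x - 2))) ` {0..1} \<subseteq> {0..1}" by auto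
  fix x :: real
  consider "x \<le> 1/2" | "1/2 < x" "x \<le> 3/4" | "3/4 < x" by linarith
  then show "((\<lambda>_. g 0) +j+ (g +j+ (\<lambda>_. g 1))) x = g (max 0 (min 1 (4*x - 2)))"
    by cases (simp_all add: path_join_def algebra_simps)
next
  show "pathin Y g" by (fact assms)
qed auto

lemma path_homotopic_from_null_loop:
  assumes a: "pathin Y a" and g: "pathin Y g" and b: "pathin Y b"
    and e: "a 0 = y" "b 0 = y" "a 1 = g 0" "g 1 = b 1"
    and null: "path_homotopic Y (a +j+ (g +j+ reverse_path b)) (\<lambda>_. y)"
  shows "path_homotopic Y g (reverse_path a +j+ b)"
proof -
  have ra: "pathin Y (reverse_path a)" and rb: "pathin Y (reverse_path b)"
    using a b pathin_reverse by auto
  have ag: "pathin Y (a +j+ g)" using a g e by (simp add: pathin_join)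
  have "path_homotopic Y (a +j+ g) ((a +j+ g) +j+ (\<lambda>_. g 1))"
    using path_homotopic_sym[OF path_homotopic_runit[OF ag]] by simp
  also have "path_homotopic Y \<dots> ((a +j+ g) +j+ (reverse_path b +j+ b))"
    using path_homotopic_join[OF path_homotopic_refl[OF ag] path_homotopic_sym[OF path_homotopic_linv[OF b]]] e
    by simp
  also have "path_homotopic Y \<dots> (((a +j+ g) +j+ reverse_path b) +j+ b)"
    using path_homotopic_assoc[OF ag rb b] e by simp
  also have "path_homotopic Y \<dots> ((a +j+ (g +j+ reverse_path b)) +j+ b)"
    using path_homotopic_join[OF path_homotopic_sym[OF path_homotopic_assoc[OF a g rb]] path_homotopic_refl[OF b]] e
    by simp
  also have "path_homotopic Y \<dots> ((\<lambda>_. y) +j+ b)"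
    using path_homotopic_join[OF null path_homotopic_refl[OF b]] e by simp
  also have "path_homotopic Y \<dots> b"
    using path_homotopic_lunit[OF b] e by simp
  finally have agb: "path_homotopic Y (a +j+ g) b" .
  have "path_homotopic Y g ((\<lambda>_. g 0) +j+ g)"
    using path_homotopic_sym[OF path_homotopic_lunit[OF g]] .
  also have "path_homotopic Y \<dots> ((reverse_path a +j+ a) +j+ g)"
    using path_homotopic_join[OF path_homotopic_sym[OF path_homotopic_linv[OF a]] path_homotopic_refl[OF g]] e
    by simp
  also have "path_homotopic Y \<dots> (reverse_path a +j+ (a +j+ g))"
    using path_homotopic_sym[OF path_homotopic_assoc[OF ra a g]] e by simp
  also have "path_homotopic Y \<dots> (reverse_path a +j+ b)"
    using path_homotopic_join[OF path_homotopic_refl[OF ra] agb] e by simp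
  finally show ?thesis .
qed

text \<open>A loop at \<open>c\<close> whose image lies in the closure of the point \<open>c\<close> is nullhomotopic:
  the homotopy that is \<open>h\<close> at time \<open>0\<close> and constantly \<open>c\<close> afterwards is continuous,
  since every open set meeting the image of \<open>h\<close> contains \<open>c\<close>.\<close>
lemma path_homotopic_const_in_closure:
  assumes h: "pathin Y h" and h0: "h 0 = c" and h1: "h 1 = c"
    and clos: "h \<in> {0..1} \<rightarrow> Y closure_of {c}"
  shows "path_homotopic Y h (\<lambda>_. c)"
  unfolding path_homotopic_def homotopic_with_def
proof (intro exI conjI)
  let ?I = "top_of_set {0..1::real}"
  let ?k = "\<lambda>z::real\<times>real. if fst z = 0 then h (snd z) else c"
  have hc: "continuous_map ?I Y h" using h by (simp add: pathin_def)
  have cT: "c \<in> topspace Y" using h h0 path_start_in_topspace by metis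
  have near: "c \<in> W" if "openin Y W" "s \<in> {0..1}" "h s \<in> W" for W s
    using that clos by (force simp: in_closure_of)
  show "continuous_map (prod_topology ?I ?I) Y ?k"
    unfolding continuous_map_def
  proof (intro conjI allI impI)
    show "?k \<in> topspace (prod_topology ?I ?I) \<rightarrow> topspace Y"
      using hc cT by (auto simp: continuous_map_def)
    fix W assume W: "openin Y W"
    show "openin (prod_topology ?I ?I) {z \<in> topspace (prod_topology ?I ?I). ?k z \<in> W}"
    proof (cases "c \<in> W")
      case True
      have e: "{z \<in> topspace (prod_topology ?I ?I). ?k z \<in> W} =
             ({0..1} \<times> {s \<in> topspace ?I. h s \<in> W}) \<union> (({0..1} \<inter> -{0}) \<times> {0..1})"
        using True by auto
      have o1: "openin ?I {s \<in> topspace ?I. h s \<in> W}"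
        using openin_continuous_map_preimage[OF hc W] .
      have o2: "openin ?I ({0..1} \<inter> -{0})" by (rule openin_open_Int) auto
      have o3: "openin ?I {0..1}" using openin_topspace[of ?I] by simp
      have "openin (prod_topology ?I ?I) ({0..1} \<times> {s \<in> topspace ?I. h s \<in> W})"
        by (subst openin_prod_Times_iff) (use o1 o3 in blast)
      moreover have "openin (prod_topology ?I ?I) (({0..1} \<inter> -{0}) \<times> {0..1})"
        by (subst openin_prod_Times_iff) (use o2 o3 in blast)
      ultimately show ?thesis unfolding e by (rule openin_Un)
    next
      case False
      then have empty: "{z \<in> topspace (prod_topology ?I ?I). ?k z \<in> W} = {}"
        using near W by auto
      show ?thesis unfolding empty by (rule openin_empty)
    qed
  qed
qed (auto simp: h0 h1)

lemma sub_path_param_range: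
  fixes u v x :: real
  assumes "0 \<le> u" "u \<le> v" "v \<le> 1" "x \<in> {0..1}"
  shows "(v - u) * x + u \<in> {u..v}"
proof -
  have "(v - u) * x \<le> (v - u) * 1" using assms by (intro mult_left_mono) auto
  then show ?thesis using assms by auto
qed

lemma pathin_sub_path:
  assumes g: "pathin Y g" and uv: "0 \<le> u" "u \<le> v" "v \<le> 1"
  shows "pathin Y (sub_path u v g)"
proof -
  have "continuous_on {0..1} (\<lambda>x::real. (v - u) * x + u)" by (intro continuous_intros)
  moreover have "(\<lambda>x::real. (v - u) * x + u) ` {0..1} \<subseteq> {0..1}"
    using sub_path_param_range[OF uv] uv by fastforce
  ultimately have "pathin Y (g \<circ> (\<lambda>x::real. (v - u) * x + u))" using pathin_reparam[OF g] by blast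
  then show ?thesis by (simp add: sub_path_def o_def)
qed

lemma sub_path_split:
  assumes g: "pathin Y g" and uv: "0 \<le> u" "u \<le> v" "v \<le> 1"
  shows "path_homotopic Y (sub_path 0 u g +j+ sub_path u v g) (sub_path 0 v g)"
proof (rule path_homotopic_via_reparam[where g=g and v="\<lambda>x. v * x"
      and u="\<lambda>x. 2 * u * min x (1/2) + 2 * (v - u) * max (x - 1/2) 0"])
  show "continuous_on {0..1} (\<lambda>x::real. 2 * u * min x (1/2) + 2 * (v - u) * max (x - 1/2) 0)"
    by (intro continuous_intros)
  show "(\<lambda>x::real. 2 * u * min x (1/2) + 2 * (v - u) * max (x - 1/2) 0) ` {0..1} \<subseteq> {0..1}"
  proof clarify
    fix x :: real assume x: "x \<in> {0..1}"
    have "2 * u * min x (1/2) \<le> 2 * u * (1/2)" using uv by (intro mult_left_mono) auto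
    moreover have "2 * (v - u) * max (x - 1/2) 0 \<le> 2 * (v - u) * (1/2)"
      using uv x by (intro mult_left_mono) (auto simp: max_def)
    moreover have "0 \<le> 2 * u * min x (1/2)" "0 \<le> 2 * (v - u) * max (x - 1/2) 0" using uv x by auto
    ultimately show "2 * u * min x (1/2) + 2 * (v - u) * max (x - 1/2) 0 \<in> {0..1}" using uv by auto
  qed
  show "continuous_on {0..1} (\<lambda>x::real. v * x)" by (intro continuous_intros)
  show "(\<lambda>x::real. v * x) ` {0..1} \<subseteq> {0..1}"
    using sub_path_param_range[OF order_refl[of 0] _ uv(3)] uv by fastforce
  fix x :: real
  show "(sub_path 0 u g +j+ sub_path u v g) x = g (2 * u * min x (1/2) + 2 * (v - u) * max (x - 1/2) 0)"
    by (cases "x \<le> 1/2") (simp_all add: path_join_def sub_path_def max_def min_def algebra_simps)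
  show "sub_path 0 v g x = g (v * x)" by (simp add: sub_path_def)
next
  show "pathin Y g" by (fact g)
qed (auto simp: field_simps)

text \<open>Lebesgue number argument: for any cover of \<open>Y\<close> by open sets with property \<open>Q\<close>, a path
  can be cut into \<open>N\<close> equal pieces each lying in one member of the cover.\<close>
lemma path_lebesgue_subdivision:
  assumes g: "pathin Y g"
    and cover: "\<And>y. y \<in> topspace Y \<Longrightarrow> \<exists>W. openin Y W \<and> y \<in> W \<and> Q W"
  obtains N :: nat where "N > 0"
    "\<And>k. k < N \<Longrightarrow> \<exists>W. Q W \<and> sub_path (k / N) (Suc k / N) g \<in> {0..1} \<rightarrow> W"
proof -
  define \<G> where "\<G> = {B. open B \<and> (\<exists>W. Q W \<and> (\<forall>s\<in>B \<inter> {0..1}. g s \<in> W))}"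
  have gc: "continuous_map (top_of_set {0..1}) Y g" using g by (simp add: pathin_def)
  have open_\<G>: "\<And>B. B \<in> \<G> \<Longrightarrow> open B" by (simp add: \<G>_def)
  have cover_\<G>: "{0..1} \<subseteq> \<Union>\<G>"
  proof
    fix s :: real assume s: "s \<in> {0..1}"
    then have "g s \<in> topspace Y" using path_image_subset_topspace[OF g] by blast
    then obtain W where W: "openin Y W" "g s \<in> W" "Q W" using cover by blast
    have "openin (top_of_set {0..1}) {t \<in> topspace (top_of_set {0..1}). g t \<in> W}"
      using openin_continuous_map_preimage[OF gc W(1)] .
    then obtain B where B: "open B" "{t \<in> {0..1}. g t \<in> W} = {0..1} \<inter> B"
      unfolding openin_open by auto
    then have "B \<in> \<G>" unfolding \<G>_def using W(3) by blast
    moreover have "s \<in> B" using B(2) s W(2) by blast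
    ultimately show "s \<in> \<Union>\<G>" by blast
  qed
  obtain e where e: "0 < e" and eG: "\<And>x. x \<in> {0..1} \<Longrightarrow> \<exists>B \<in> \<G>. ball x e \<subseteq> B"
    using Heine_Borel_lemma[OF compact_Icc cover_\<G> open_\<G>] by blast
  obtain N :: nat where N: "N > 0" "inverse (real N) < e"
    using real_arch_inverse e by blast
  have "\<exists>W. Q W \<and> sub_path (k / N) (Suc k / N) g \<in> {0..1} \<rightarrow> W" if k: "k < N" for k
  proof -
    define u where "u = real k / real N"
    define v where "v = real (Suc k) / real N"
    have uv: "0 \<le> u" "u \<le> v" "v \<le> 1" "v - u = inverse (real N)"
      using N k by (auto simp: u_def v_def divide_right_mono field_simps)
    obtain B where B: "B \<in> \<G>" "ball u e \<subseteq> B" using eG[of u] uv by auto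
    then obtain W where W: "Q W" "\<forall>s\<in>B \<inter> {0..1}. g s \<in> W" unfolding \<G>_def by blast
    have "sub_path u v g s \<in> W" if s: "s \<in> {0..1}" for s
    proof -
      have t: "(v - u) * s + u \<in> {u..v}" using sub_path_param_range[OF uv(1-3) s] .
      then have "dist u ((v - u) * s + u) < e" using uv(4) N(2) by (simp add: dist_real_def)
      then show ?thesis using B(2) W(2) t uv by (auto simp: sub_path_def)
    qed
    then show ?thesis using W(1) by (auto simp: u_def v_def)
  qed
  with N show ?thesis using that by blast
qed

lemma path_property_from_local:
  fixes P :: "(real \<Rightarrow> 'b) \<Rightarrow> bool"
  assumes homotopy: "\<And>g h. P g \<Longrightarrow> path_homotopic Y g h \<Longrightarrow> P h"
    and join: "\<And>g h. P g \<Longrightarrow> P h \<Longrightarrow> pathin Y g \<Longrightarrow> pathin Y h \<Longrightarrow> g 1 = h 0 \<Longrightarrow> P (g +j+ h)"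
    and const: "\<And>c. c \<in> topspace Y \<Longrightarrow> P (\<lambda>_. c)"
    and local: "\<And>y. y \<in> topspace Y \<Longrightarrow>
                  \<exists>W. openin Y W \<and> y \<in> W \<and> (\<forall>h. pathin Y h \<and> h \<in> {0..1} \<rightarrow> W \<longrightarrow> P h)"
    and g: "pathin Y g"
  shows "P g"
proof -
  obtain N :: nat where N: "N > 0"
    and pieces: "\<And>k. k < N \<Longrightarrow> \<exists>W. (\<forall>h. pathin Y h \<and> h \<in> {0..1} \<rightarrow> W \<longrightarrow> P h) \<and>
                                       sub_path (k / N) (Suc k / N) g \<in> {0..1} \<rightarrow> W"
    using path_lebesgue_subdivision[OF g local] by blast
  have "P (sub_path 0 (k / N) g)" if "k \<le> N" for k
    using that
  proof (induction k)
    case 0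
    have "sub_path 0 (0 / N) g = (\<lambda>_. g 0)" by (simp add: sub_path_def)
    then show ?case using const[OF path_start_in_topspace[OF g]] by simp
  next
    case (Suc k)
    define u where "u = real k / real N"
    define v where "v = real (Suc k) / real N"
    have uv: "0 \<le> u" "u \<le> v" "v \<le> 1"
      using N Suc.prems by (auto simp: u_def v_def divide_right_mono)
    have piece: "P (sub_path u v g)"
      using pieces[of k] pathin_sub_path[OF g uv] Suc.prems by (auto simp: u_def v_def)
    have "P (sub_path 0 u g +j+ sub_path u v g)"
      using Suc piece pathin_sub_path[OF g order_refl uv(1)] pathin_sub_path[OF g uv] uv
      by (intro join) (auto simp: u_def sub_path_def)
    then have "P (sub_path 0 v g)" using sub_path_split[OF g uv] by (rule homotopy)
    then show ?case by (simp add: v_def)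
  qed
  from this[of N] N show ?thesis by (simp add: sub_path_def)
qed

section \<open>Paths near a point whose small loops are nullhomotopic\<close>

lemma homotopic_loops_at_iff_path_homotopic:
  "f 0 = y \<Longrightarrow> f 1 = y \<Longrightarrow> homotopic_loops_at Y y f g \<longleftrightarrow> path_homotopic Y f g"
  by (simp add: homotopic_loops_at_def path_homotopic_def)

text \<open>Let \<open>p : X \<rightarrow> Y\<close> be continuous, let small loops at \<open>p x\<close> (those in \<open>U\<close>) be
  nullhomotopic, and let \<open>V \<ni> x\<close> be path connected with \<open>p V \<subseteq> U\<close>.  Then every path in
  \<open>p V\<close> is homotopic to the projection of a path in \<open>V\<close>: with paths \<open>\<alpha>\<^sub>0, \<alpha>\<^sub>1\<close> in \<open>V\<close> from
  \<open>x\<close> to points over the end points of \<open>g\<close>, the loop \<open>p\<alpha>\<^sub>0 \<cdot> g \<cdot> (p\<alpha>\<^sub>1)\<^sup>-\<^sup>1\<close> lies in \<open>U\<close>.\<close>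
lemma path_homotopic_projection_near_point:
  assumes p: "continuous_map X Y p"
    and small_loops: "\<And>l. loop_at (subtopology Y U) (p x) l \<Longrightarrow> homotopic_loops_at Y (p x) l (\<lambda>_. p x)"
    and V: "path_connectedin X V" "x \<in> V" "p ` V \<subseteq> U"
    and g: "pathin Y g" "g \<in> {0..1} \<rightarrow> p ` V"
  shows "\<exists>\<gamma>. pathin X \<gamma> \<and> path_homotopic Y g (p \<circ> \<gamma>)"
proof -
  have paths_in_V: "\<forall>z\<in>V. \<forall>w\<in>V. \<exists>\<alpha>. pathin X \<alpha> \<and> \<alpha> \<in> {0..1} \<rightarrow> V \<and> \<alpha> 0 = z \<and> \<alpha> 1 = w"
    using V(1) unfolding path_connectedin by blast
  have "g 0 \<in> p ` V" "g 1 \<in> p ` V" using g(2) by auto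
  then obtain z0 z1 where z: "z0 \<in> V" "p z0 = g 0" "z1 \<in> V" "p z1 = g 1"
    by (metis imageE)
  obtain \<alpha>0 where \<alpha>0: "pathin X \<alpha>0" "\<alpha>0 \<in> {0..1} \<rightarrow> V" "\<alpha>0 0 = x" "\<alpha>0 1 = z0"
    using paths_in_V V(2) z(1) by blast
  obtain \<alpha>1 where \<alpha>1: "pathin X \<alpha>1" "\<alpha>1 \<in> {0..1} \<rightarrow> V" "\<alpha>1 0 = x" "\<alpha>1 1 = z1"
    using paths_in_V V(2) z(3) by blast
  define a where "a = p \<circ> \<alpha>0"
  define b where "b = p \<circ> \<alpha>1"
  have ab: "pathin Y a" "pathin Y b" using \<alpha>0(1) \<alpha>1(1) p by (auto simp: a_def b_def pathin_compose)
  have ab_ends: "a 0 = p x" "b 0 = p x" "a 1 = g 0" "g 1 = b 1"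
    using \<alpha>0 \<alpha>1 z by (auto simp: a_def b_def)
  have ab_in_U: "a \<in> {0..1} \<rightarrow> U" "b \<in> {0..1} \<rightarrow> U" "g \<in> {0..1} \<rightarrow> U"
    using \<alpha>0(2) \<alpha>1(2) g(2) V(3) by (auto simp: a_def b_def Pi_def image_subset_iff)
  define l where "l = a +j+ (g +j+ reverse_path b)"
  have "pathin Y l" "l \<in> {0..1} \<rightarrow> U" "l 0 = p x" "l 1 = p x"
    using ab g(1) ab_ends ab_in_U
    by (auto simp: l_def pathin_join pathin_reverse path_join_image reverse_path_image)
  then have "loop_at (subtopology Y U) (p x) l"
    by (auto simp: loop_at_def pathin_subtopology)
  then have "homotopic_loops_at Y (p x) l (\<lambda>_. p x)" by (rule small_loops)
  then have "path_homotopic Y l (\<lambda>_. p x)"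
    using homotopic_loops_at_iff_path_homotopic[of l "p x"] \<open>l 0 = p x\<close> \<open>l 1 = p x\<close> by simp
  then have "path_homotopic Y g (reverse_path a +j+ b)"
    unfolding l_def by (rule path_homotopic_from_null_loop[OF ab(1) g(1) ab(2) ab_ends])
  moreover have "reverse_path a +j+ b = p \<circ> (reverse_path \<alpha>0 +j+ \<alpha>1)"
    by (simp add: a_def b_def comp_path_join comp_reverse_path)
  moreover have "pathin X (reverse_path \<alpha>0 +j+ \<alpha>1)"
    using \<alpha>0 \<alpha>1 by (simp add: pathin_join pathin_reverse)
  ultimately show ?thesis by metis
qed

section \<open>Quotient topology\<close>

text \<open>The sets declared open by \<open>quotient_top\<close> do form a topology, so its open sets
  and its underlying set are the expected ones and the quotient map is continuous.\<close>

lemma openin_quotient_top: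
  "openin (quotient_top X f) U \<longleftrightarrow> U \<subseteq> f ` topspace X \<and> openin X {x \<in> topspace X. f x \<in> U}"
proof -
  define L where "L = (\<lambda>U. U \<subseteq> f ` topspace X \<and> openin X {x \<in> topspace X. f x \<in> U})"
  have "L (S \<inter> T)" if "L S" "L T" for S T
  proof -
    have "{x \<in> topspace X. f x \<in> S \<inter> T} = {x \<in> topspace X. f x \<in> S} \<inter> {x \<in> topspace X. f x \<in> T}"
      by auto
    then show ?thesis using that unfolding L_def by auto
  qed
  moreover have "L (\<Union>K)" if K: "\<forall>S\<in>K. L S" for K
  proof -
    have "{x \<in> topspace X. f x \<in> \<Union>K} = \<Union>((\<lambda>S. {x \<in> topspace X. f x \<in> S}) ` K)"
      by auto
    moreover have "openin X (\<Union>((\<lambda>S. {x \<in> topspace X. f x \<in> S}) ` K))"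
      using K unfolding L_def by (intro openin_Union) auto
    ultimately show ?thesis using K unfolding L_def by auto
  qed
  ultimately have "istopology L" unfolding istopology_def by blast
  then have "openin (quotient_top X f) = L" by (simp add: quotient_top_def L_def[symmetric])
  then show ?thesis by (simp add: L_def)
qed

lemma topspace_quotient_top: "topspace (quotient_top X f) = f ` topspace X"
proof -
  have "{x \<in> topspace X. f x \<in> f ` topspace X} = topspace X" by auto
  then have "openin (quotient_top X f) (f ` topspace X)"
    by (auto simp: openin_quotient_top)
  then have "f ` topspace X \<subseteq> topspace (quotient_top X f)" by (rule openin_subset)
  moreover have "topspace (quotient_top X f) \<subseteq> f ` topspace X"
    using openin_quotient_top[of X f "topspace (quotient_top X f)"] by simp
  ultimately show ?thesis by blast
qed

lemma continuous_map_quotient_top: "continuous_map X (quotient_top X f) f"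
  unfolding continuous_map_def by (auto simp: openin_quotient_top topspace_quotient_top)

section \<open>The collapse map \<open>p : X \<rightarrow> X/(A_1,\<dots>,A_n)\<close>\<close>

locale collapse =
  fixes X :: "'a topology" and n :: nat and A :: "nat \<Rightarrow> 'a set"
  assumes A_open: "\<And>i. i \<in> {1..n} \<Longrightarrow> openin X (A i)"
    and A_closure_path_connected: "\<And>i. i \<in> {1..n} \<Longrightarrow> path_connectedin X (X closure_of (A i))"
begin

abbreviation "R \<equiv> collapse_rel X n A"
abbreviation "p \<equiv> collapse_map X n A"
abbreviation "Y \<equiv> collapse_space X n A"

lemma A_subset: "i \<in> {1..n} \<Longrightarrow> A i \<subseteq> topspace X"
  using A_open openin_subset by blast

lemma collapse_rel_equiv: "equiv (topspace X) R"
proof -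
  have "Id_on (topspace X) \<union> (\<Union>i\<in>{1..n}. A i \<times> A i) \<subseteq> topspace X \<times> topspace X"
    using A_subset by blast
  then have sub: "R \<subseteq> topspace X \<times> topspace X"
    unfolding collapse_rel_def by (rule trancl_subset_Sigma)
  moreover have "(x, x) \<in> R" if "x \<in> topspace X" for x
    unfolding collapse_rel_def using that by (intro r_into_trancl) auto
  moreover have "sym R" unfolding collapse_rel_def
    by (rule sym_trancl) (auto simp: sym_def)
  moreover have "trans R" unfolding collapse_rel_def by simp
  ultimately show ?thesis by (auto simp: equiv_def refl_on_def)
qed

lemma collapse_rel_subset: "(x, y) \<in> R \<Longrightarrow> x \<in> topspace X \<and> y \<in> topspace X"
  using collapse_rel_equiv by (auto simp: equiv_def refl_on_def)

lemma collapse_rel_trans: "(x, y) \<in> R \<Longrightarrow> (y, z) \<in> R \<Longrightarrow> (x, z) \<in> R"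
  using collapse_rel_equiv by (meson equiv_def transE)

lemma collapse_map_eq_iff:
  "x \<in> topspace X \<Longrightarrow> y \<in> topspace X \<Longrightarrow> p x = p y \<longleftrightarrow> (x, y) \<in> R"
  using equiv_class_eq_iff[OF collapse_rel_equiv, of x y] by (auto simp: collapse_map_def)

lemma collapse_rel_cases: "(z, v) \<in> R \<Longrightarrow> z = v \<or> (\<exists>i\<in>{1..n}. z \<in> A i)"
  unfolding collapse_rel_def by (induction rule: trancl_induct) auto

lemma collapse_rel_A: "i \<in> {1..n} \<Longrightarrow> x \<in> A i \<Longrightarrow> y \<in> A i \<Longrightarrow> (x, y) \<in> R"
  unfolding collapse_rel_def by (intro r_into_trancl) auto

lemma topspace_collapse: "topspace Y = p ` topspace X"
  by (simp add: collapse_space_def topspace_quotient_top)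

lemma openin_collapse: "openin Y U \<longleftrightarrow> U \<subseteq> p ` topspace X \<and> openin X {x \<in> topspace X. p x \<in> U}"
  by (simp add: collapse_space_def openin_quotient_top)

lemma continuous_collapse_map: "continuous_map X Y p"
  by (simp add: collapse_space_def continuous_map_quotient_top)

text \<open>Since the \<open>A_i\<close> are open, \<open>p\<close> is an open map: the saturation of an open \<open>V\<close> is \<open>V\<close>
  together with whole sets \<open>A_i\<close>.\<close>
lemma collapse_map_open: assumes V: "openin X V" shows "openin Y (p ` V)"
  unfolding openin_collapse
proof
  have VT: "V \<subseteq> topspace X" using V openin_subset by blast
  then show "p ` V \<subseteq> p ` topspace X" by blast
  show "openin X {x \<in> topspace X. p x \<in> p ` V}"
  proof (subst openin_subopen, intro ballI)
    fix z assume z: "z \<in> {x \<in> topspace X. p x \<in> p ` V}"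
    then obtain v where v: "v \<in> V" "p z = p v" by auto
    then have zv: "(z, v) \<in> R" using collapse_map_eq_iff z VT by blast
    show "\<exists>U. openin X U \<and> z \<in> U \<and> U \<subseteq> {x \<in> topspace X. p x \<in> p ` V}"
    proof (cases "z = v")
      case True
      then show ?thesis using V v VT by blast
    next
      case False
      then obtain i where i: "i \<in> {1..n}" "z \<in> A i" using collapse_rel_cases[OF zv] by blast
      have "p w = p v" if "w \<in> A i" for w
        using collapse_rel_trans[OF collapse_rel_A[OF i(1) that i(2)] zv]
          collapse_map_eq_iff collapse_rel_subset by blast
      then have "A i \<subseteq> {x \<in> topspace X. p x \<in> p ` V}" using A_subset[OF i(1)] v by auto
      then show ?thesis using A_open[OF i(1)] i by blast
    qed
  qed
qed

text \<open>Points of one fibre are joined by a path whose projection stays in the closure of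
  that fibre's image point: chain together paths in the path connected closures of
  the \<open>A_i\<close>, which \<open>p\<close> maps into the closure of \<open>p(A_i)\<close>, a single point.\<close>
lemma fibre_path_in_closure:
  assumes "(x0, x) \<in> R"
  shows "\<exists>\<eta>. pathin X \<eta> \<and> \<eta> 0 = x0 \<and> \<eta> 1 = x \<and> (p \<circ> \<eta>) \<in> {0..1} \<rightarrow> Y closure_of {p x0}"
proof -
  let ?C = "Y closure_of {p x0}"
  have x0: "x0 \<in> topspace X" using collapse_rel_subset assms by blast
  have pC: "p y \<in> ?C" if "(x0, y) \<in> R" for y
  proof -
    have "p y = p x0" using that collapse_map_eq_iff collapse_rel_subset by metis
    moreover have "p x0 \<in> topspace Y" using x0 topspace_collapse by simp
    ultimately show ?thesis using closure_of_subset[of "{p x0}" Y] by simp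
  qed
  have link: "\<exists>\<eta>. pathin X \<eta> \<and> \<eta> 0 = y \<and> \<eta> 1 = z \<and> (p \<circ> \<eta>) \<in> {0..1} \<rightarrow> ?C"
    if xy: "(x0, y) \<in> R" and yz: "(y, z) \<in> Id_on (topspace X) \<union> (\<Union>i\<in>{1..n}. A i \<times> A i)" for y z
    using yz
  proof
    assume "(y, z) \<in> Id_on (topspace X)"
    then show ?thesis using pC[OF xy] by (intro exI[of _ "\<lambda>_. y"]) auto
  next
    assume "(y, z) \<in> (\<Union>i\<in>{1..n}. A i \<times> A i)"
    then obtain i where i: "i \<in> {1..n}" "y \<in> A i" "z \<in> A i" by auto
    have "p w = p x0" if "w \<in> A i" for w
      using collapse_rel_trans[OF xy collapse_rel_A[OF i(1,2) that]]
        collapse_map_eq_iff collapse_rel_subset by metis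
    then have "p ` A i \<subseteq> {p x0}" by blast
    then have "p ` (X closure_of A i) \<subseteq> ?C"
      using continuous_map_image_closure_subset[OF continuous_collapse_map] closure_of_mono by blast
    moreover obtain \<eta> where "pathin X \<eta>" "\<eta> \<in> {0..1} \<rightarrow> X closure_of A i" "\<eta> 0 = y" "\<eta> 1 = z"
      using A_closure_path_connected[OF i(1)] closure_of_subset[OF A_subset[OF i(1)]] i
      unfolding path_connectedin by blast
    ultimately show ?thesis by (intro exI[of _ \<eta>]) (auto simp: Pi_def image_subset_iff)
  qed
  have x0x0: "(x0, x0) \<in> R" using collapse_rel_equiv x0 by (auto simp: equiv_def refl_on_def)
  from assms show ?thesis
    unfolding collapse_rel_def
  proof (induction rule: trancl_induct)
    case (base y)
    then show ?case using link[OF x0x0] by blast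
  next
    case (step y z)
    then obtain \<eta> where \<eta>: "pathin X \<eta>" "\<eta> 0 = x0" "\<eta> 1 = y" "(p \<circ> \<eta>) \<in> {0..1} \<rightarrow> ?C"
      by blast
    obtain \<eta>' where \<eta>': "pathin X \<eta>'" "\<eta>' 0 = y" "\<eta>' 1 = z" "(p \<circ> \<eta>') \<in> {0..1} \<rightarrow> ?C"
      using link step(1,2) unfolding collapse_rel_def by blast
    show ?case using \<eta> \<eta>'
      by (intro exI[of _ "\<eta> +j+ \<eta>'"]) (simp add: pathin_join comp_path_join path_join_image)
  qed
qed

lemma fibre_path:
  assumes "x0 \<in> topspace X" "x1 \<in> topspace X" "p x0 = p x1"
  shows "\<exists>\<eta>. pathin X \<eta> \<and> \<eta> 0 = x0 \<and> \<eta> 1 = x1 \<and> path_homotopic Y (p \<circ> \<eta>) (\<lambda>_. p x0)"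
proof -
  obtain \<eta> where \<eta>: "pathin X \<eta>" "\<eta> 0 = x0" "\<eta> 1 = x1" "(p \<circ> \<eta>) \<in> {0..1} \<rightarrow> Y closure_of {p x0}"
    using fibre_path_in_closure assms collapse_map_eq_iff by blast
  have "path_homotopic Y (p \<circ> \<eta>) (\<lambda>_. p x0)"
    using \<eta> assms(3) pathin_compose[OF \<eta>(1) continuous_collapse_map]
    by (intro path_homotopic_const_in_closure) auto
  then show ?thesis using \<eta> by blast
qed

end

section \<open>Lifting paths along the collapse map\<close>

context collapse
begin

definition liftable :: "(real \<Rightarrow> 'a set) \<Rightarrow> bool" where
  "liftable g \<longleftrightarrow>
     (\<forall>x0 x1. x0 \<in> topspace X \<and> x1 \<in> topspace X \<and> p x0 = g 0 \<and> p x1 = g 1 \<longrightarrow>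
        (\<exists>\<gamma>. pathin X \<gamma> \<and> \<gamma> 0 = x0 \<and> \<gamma> 1 = x1 \<and> path_homotopic Y (p \<circ> \<gamma>) g))"

lemma liftable_homotopic:
  assumes "liftable g" "path_homotopic Y g h"
  shows "liftable h"
  unfolding liftable_def
proof (intro allI impI)
  fix x0 x1 assume x: "x0 \<in> topspace X \<and> x1 \<in> topspace X \<and> p x0 = h 0 \<and> p x1 = h 1"
  have "h 0 = g 0" "h 1 = g 1" using path_homotopic_imp_paths[OF assms(2)] by auto
  then obtain \<gamma> where "pathin X \<gamma>" "\<gamma> 0 = x0" "\<gamma> 1 = x1" "path_homotopic Y (p \<circ> \<gamma>) g"
    using assms(1) x unfolding liftable_def by metis
  then show "\<exists>\<gamma>. pathin X \<gamma> \<and> \<gamma> 0 = x0 \<and> \<gamma> 1 = x1 \<and> path_homotopic Y (p \<circ> \<gamma>) h"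
    using path_homotopic_trans assms(2) by blast
qed

lemma liftable_join:
  assumes g: "liftable g" "pathin Y g" and h: "liftable h" "pathin Y h" and e: "g 1 = h 0"
  shows "liftable (g +j+ h)"
  unfolding liftable_def
proof (intro allI impI)
  fix x0 x1 assume x: "x0 \<in> topspace X \<and> x1 \<in> topspace X \<and> p x0 = (g +j+ h) 0 \<and> p x1 = (g +j+ h) 1"
  obtain xm where xm: "xm \<in> topspace X" "p xm = g 1"
    using path_finish_in_topspace[OF g(2)] topspace_collapse by auto
  obtain \<gamma>1 where \<gamma>1: "pathin X \<gamma>1" "\<gamma>1 0 = x0" "\<gamma>1 1 = xm" "path_homotopic Y (p \<circ> \<gamma>1) g"
    using g(1) x xm unfolding liftable_def by (metis path_join_start)
  obtain \<gamma>2 where \<gamma>2: "pathin X \<gamma>2" "\<gamma>2 0 = xm" "\<gamma>2 1 = x1" "path_homotopic Y (p \<circ> \<gamma>2) h"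
    using h(1) x xm e unfolding liftable_def by (metis path_join_finish)
  have "path_homotopic Y ((p \<circ> \<gamma>1) +j+ (p \<circ> \<gamma>2)) (g +j+ h)"
    using path_homotopic_join[OF \<gamma>1(4) \<gamma>2(4)] \<gamma>1(3) \<gamma>2(2) by simp
  moreover have "pathin X (\<gamma>1 +j+ \<gamma>2)" using \<gamma>1 \<gamma>2 by (simp add: pathin_join)
  ultimately show "\<exists>\<gamma>. pathin X \<gamma> \<and> \<gamma> 0 = x0 \<and> \<gamma> 1 = x1 \<and> path_homotopic Y (p \<circ> \<gamma>) (g +j+ h)"
    using \<gamma>1 \<gamma>2 by (intro exI[of _ "\<gamma>1 +j+ \<gamma>2"]) (simp add: comp_path_join)
qed

text \<open>A path homotopic to the projection of some path \<open>\<gamma>\<close> is liftable: fibre paths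
  connect the prescribed end points to those of \<open>\<gamma>\<close>, and their projections are
  nullhomotopic.\<close>
lemma liftable_if_homotopic_projection:
  assumes \<gamma>: "pathin X \<gamma>" and hom: "path_homotopic Y (p \<circ> \<gamma>) g"
  shows "liftable g"
  unfolding liftable_def
proof (intro allI impI)
  fix x0 x1 assume x: "x0 \<in> topspace X \<and> x1 \<in> topspace X \<and> p x0 = g 0 \<and> p x1 = g 1"
  have g: "pathin Y g" "g 0 = p (\<gamma> 0)" "g 1 = p (\<gamma> 1)"
    using path_homotopic_imp_paths[OF hom] by auto
  have \<gamma>_ends: "\<gamma> 0 \<in> topspace X" "\<gamma> 1 \<in> topspace X"
    using \<gamma> path_start_in_topspace path_finish_in_topspace by blast+
  obtain \<eta>0 where \<eta>0: "pathin X \<eta>0" "\<eta>0 0 = x0" "\<eta>0 1 = \<gamma> 0" "path_homotopic Y (p \<circ> \<eta>0) (\<lambda>_. g 0)"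
    using fibre_path[of x0 "\<gamma> 0"] x \<gamma>_ends g by auto
  obtain \<eta>1 where \<eta>1: "pathin X \<eta>1" "\<eta>1 0 = \<gamma> 1" "\<eta>1 1 = x1" "path_homotopic Y (p \<circ> \<eta>1) (\<lambda>_. g 1)"
    using fibre_path[of "\<gamma> 1" x1] x \<gamma>_ends g by auto
  have "path_homotopic Y (p \<circ> (\<eta>0 +j+ (\<gamma> +j+ \<eta>1))) ((\<lambda>_. g 0) +j+ (g +j+ (\<lambda>_. g 1)))"
    unfolding comp_path_join using \<eta>0 \<eta>1 g
    by (intro path_homotopic_join hom) auto
  also have "path_homotopic Y \<dots> g" using path_homotopic_pad[OF g(1)] .
  finally show "\<exists>\<gamma>'. pathin X \<gamma>' \<and> \<gamma>' 0 = x0 \<and> \<gamma>' 1 = x1 \<and> path_homotopic Y (p \<circ> \<gamma>') g"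
    using \<eta>0 \<eta>1 \<gamma> by (intro exI[of _ "\<eta>0 +j+ (\<gamma> +j+ \<eta>1)"]) (simp add: pathin_join)
qed

lemma liftable_const:
  assumes "c \<in> topspace Y"
  shows "liftable (\<lambda>_. c)"
proof -
  obtain x where x: "x \<in> topspace X" "c = p x" using assms topspace_collapse by auto
  then have "path_homotopic Y (p \<circ> (\<lambda>_. x)) (\<lambda>_. c)"
    using assms by (simp add: path_homotopic_refl o_def)
  with x(1) show ?thesis by (intro liftable_if_homotopic_projection[of "\<lambda>_. x"]) auto
qed

lemma liftable_near_point:
  assumes lpc: "locally_path_connected_space X" and slsc: "semi_locally_simply_connected Y"
    and y: "y \<in> topspace Y"
  shows "\<exists>W. openin Y W \<and> y \<in> W \<and> (\<forall>g. pathin Y g \<and> g \<in> {0..1} \<rightarrow> W \<longrightarrow> liftable g)"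
proof -
  obtain U where U: "openin Y U" "y \<in> U"
    and small_loops: "\<And>l. loop_at (subtopology Y U) y l \<Longrightarrow> homotopic_loops_at Y y l (\<lambda>_. y)"
    using slsc y unfolding semi_locally_simply_connected_def by blast
  obtain x where x: "x \<in> topspace X" "y = p x" using y topspace_collapse by auto
  have "openin X {z \<in> topspace X. p z \<in> U}" using U(1) unfolding openin_collapse by blast
  then obtain V where V: "openin X V" "path_connectedin X V" "x \<in> V" "V \<subseteq> {z \<in> topspace X. p z \<in> U}"
    using lpc x U(2) unfolding locally_path_connected_space by blast
  have pVU: "p ` V \<subseteq> U" using V(4) by auto
  have "liftable g" if g: "pathin Y g" "g \<in> {0..1} \<rightarrow> p ` V" for g
  proof -
    obtain \<gamma> where "pathin X \<gamma>" "path_homotopic Y g (p \<circ> \<gamma>)"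
      using path_homotopic_projection_near_point[OF continuous_collapse_map
          small_loops[unfolded x(2)] V(2,3) pVU g] by blast
    then show ?thesis by (blast intro: liftable_if_homotopic_projection path_homotopic_sym)
  qed
  moreover have "openin Y (p ` V)" "y \<in> p ` V" using collapse_map_open[OF V(1)] V(3) x(2) by auto
  ultimately show ?thesis by blast
qed

lemma liftable_all:
  assumes "locally_path_connected_space X" "semi_locally_simply_connected Y" "pathin Y g"
  shows "liftable g"
proof (rule path_property_from_local[where P=liftable])
  show "\<And>y. y \<in> topspace Y \<Longrightarrow>
          \<exists>W. openin Y W \<and> y \<in> W \<and> (\<forall>h. pathin Y h \<and> h \<in> {0..1} \<rightarrow> W \<longrightarrow> liftable h)"
    using liftable_near_point assms(1,2) by blast
qed (use assms(3) liftable_homotopic liftable_join liftable_const in auto)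

end

theorem corollary3p6:
  fixes X :: "'a topology" and n :: nat and A :: "nat \<Rightarrow> 'a set" and a :: 'a
  assumes "connected_space X"
    and "locally_path_connected_space X"
    and "\<And>i. i \<in> {1..n} \<Longrightarrow> openin X (A i)"
    and "\<And>i. i \<in> {1..n} \<Longrightarrow> path_connectedin X (X closure_of (A i))"
    and "semi_locally_simply_connected (collapse_space X n A)"
    and "a \<in> (\<Union>i\<in>{1..n}. A i)"
  shows "\<forall>g. loop_at (collapse_space X n A) (collapse_map X n A a) g \<longrightarrow>
           (\<exists>f. loop_at X a f \<and>
              homotopic_loops_at (collapse_space X n A) (collapse_map X n A a)
                 (collapse_map X n A \<circ> f) g)"
proof (intro allI impI)
  interpret collapse X n A using assms(3,4) by unfold_locales
  fix g assume g: "loop_at Y (p a) g"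
  have a: "a \<in> topspace X" using assms(6) A_subset by blast
  have "liftable g" using liftable_all[OF assms(2,5)] g by (simp add: loop_at_def)
  then obtain f where f: "pathin X f" "f 0 = a" "f 1 = a" "path_homotopic Y (p \<circ> f) g"
    using a g unfolding liftable_def loop_at_def by blast
  then show "\<exists>f. loop_at X a f \<and> homotopic_loops_at Y (p a) (p \<circ> f) g"
    by (auto simp: loop_at_def homotopic_loops_at_iff_path_homotopic)
qed

end
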